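(* Let $(X,\delta,c)$ be an accepting automaton over $\Sigma$ and let $\mu\mathrm{PL}(\delta,c)$ be as in the context. For every $x\in X$, the language $L(x,c)=\{u\in\Sigma^\ast\mid\delta(x)(u)\in c\}$ belongs to $\mu\mathrm{PL}(\delta,c)$, i.e. there is a state $\mathcal{U}$ of $\mu\mathrm{PL}(\delta,c)$ with $L(\mathcal{U})=L(x,c)$.
   Context: $\Sigma$ is a finite alphabet, $\Sigma^\ast$ the free monoid with empty word $\epsilon$, $u^r$ the reversal of $u$. An accepting automaton is $(X,\delta,c)$ with $\delta:X\to X^\Sigma$ (extended to words by $\delta(x)(\epsilon)=x$, $\delta(x)(wa)=\delta(\delta(x)(w))(a)$) and $c\subseteq X$. Define $\widehat{\delta}(U)(a)=\{x\mid\delta(x)(a)\in U\}$ for $U\subseteq X$, extended to words, so $\widehat{\delta}(U)(w)=\{x\mid\delta(x)(w^r)\in U\}$. Let $\langle c\rangle=\{\widehat{\delta}(c)(w)\mid w\in\Sigma^\ast\}$ and $u\approx v$ iff $\widehat{\delta}(U)(u)=\widehat{\delta}(U)(v)$ for all $U\in\langle c\rangle$. $\mu\mathrm{PL}(\delta,c)$ has state space $P(\Sigma^\ast/{\approx})$, transition $\widehat{\sigma}(\mathcal{U})(u)=\{[w]\mid[wu^r]\in\mathcal{U}\}$ and final states $\{\mathcal{U}\mid[\epsilon]\in\mathcal{U}\}$; $L(\mathcal{U})=\{u\mid[\epsilon]\in\widehat{\sigma}(\mathcal{U})(u)\}$. *)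

theory Defs
  imports Main
begin

text \<open>Words over the alphabet 'a are lists; the empty word is []; u^r is rev u.
  An accepting automaton (X, delta, c) is given by delta :: 'x => 'a => 'x and c :: 'x set.\<close>

definition dstar :: "('x \<Rightarrow> 'a \<Rightarrow> 'x) \<Rightarrow> 'x \<Rightarrow> 'a list \<Rightarrow> 'x" where
  "dstar \<delta> x w = foldl \<delta> x w"

definition hatd :: "('x \<Rightarrow> 'a \<Rightarrow> 'x) \<Rightarrow> 'x set \<Rightarrow> 'a \<Rightarrow> 'x set" where
  "hatd \<delta> U a = {x. \<delta> x a \<in> U}"

text \<open>Extension to words: hatd(U)(eps) = U, hatd(U)(wa) = hatd(hatd(U)(w))(a),
  so that hatd(U)(w) = {x | delta(x)(w^r) in U}.\<close>
definition hatdw :: "('x \<Rightarrow> 'a \<Rightarrow> 'x) \<Rightarrow> 'x set \<Rightarrow> 'a list \<Rightarrow> 'x set" where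
  "hatdw \<delta> U w = foldl (hatd \<delta>) U w"

definition gen :: "('x \<Rightarrow> 'a \<Rightarrow> 'x) \<Rightarrow> 'x set \<Rightarrow> 'x set set" where
  "gen \<delta> c = {hatdw \<delta> c w | w. True}"

definition approx :: "('x \<Rightarrow> 'a \<Rightarrow> 'x) \<Rightarrow> 'x set \<Rightarrow> ('a list \<times> 'a list) set" where
  "approx \<delta> c = {(u, v). \<forall>U \<in> gen \<delta> c. hatdw \<delta> U u = hatdw \<delta> U v}"

definition cls :: "('x \<Rightarrow> 'a \<Rightarrow> 'x) \<Rightarrow> 'x set \<Rightarrow> 'a list \<Rightarrow> 'a list set" where
  "cls \<delta> c w = approx \<delta> c `` {w}"

text \<open>Sigma*/~ ; states of muPL(delta,c) are subsets of it.\<close>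
definition quot :: "('x \<Rightarrow> 'a \<Rightarrow> 'x) \<Rightarrow> 'x set \<Rightarrow> 'a list set set" where
  "quot \<delta> c = UNIV // approx \<delta> c"

definition sigmahat :: "('x \<Rightarrow> 'a \<Rightarrow> 'x) \<Rightarrow> 'x set \<Rightarrow> 'a list set set \<Rightarrow> 'a list \<Rightarrow> 'a list set set" where
  "sigmahat \<delta> c \<U> u = {cls \<delta> c w | w. cls \<delta> c (w @ rev u) \<in> \<U>}"

definition muPL_lang :: "('x \<Rightarrow> 'a \<Rightarrow> 'x) \<Rightarrow> 'x set \<Rightarrow> 'a list set set \<Rightarrow> 'a list set" where
  "muPL_lang \<delta> c \<U> = {u. cls \<delta> c [] \<in> sigmahat \<delta> c \<U> u}"

definition aut_lang :: "('x \<Rightarrow> 'a \<Rightarrow> 'x) \<Rightarrow> 'x set \<Rightarrow> 'x \<Rightarrow> 'a list set" where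
  "aut_lang \<delta> c x = {u. dstar \<delta> x u \<in> c}"

end

theory Submission
  imports Defs
begin

text \<open>For \<open>x\<close> take the state of all classes \<open>[w]\<close> with \<open>x \<in> \<delta>\<^sup>^(c)(w)\<close>. Membership of
  \<open>[w]\<close> does not depend on the representative because \<open>c \<in> \<langle>c\<rangle>\<close>, so \<open>\<approx>\<close> refines equality of
  \<open>\<delta>\<^sup>^(c)(-)\<close>. As \<open>\<approx>\<close> is a right congruence, the language of any state \<open>\<U>\<close> is
  \<open>{u | [u\<^sup>r] \<in> \<U>}\<close>, and \<open>x \<in> \<delta>\<^sup>^(c)(u\<^sup>r)\<close> means \<open>\<delta>(x)(u) \<in> c\<close>.\<close>

lemma hatdw_append: "hatdw \<delta> U (w @ v) = hatdw \<delta> (hatdw \<delta> U w) v"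
  by (simp add: hatdw_def)

lemma mem_hatdw_iff: "y \<in> hatdw \<delta> U w \<longleftrightarrow> dstar \<delta> y (rev w) \<in> U"
proof (induction w arbitrary: y rule: rev_induct)
  case Nil
  then show ?case by (simp add: hatdw_def dstar_def)
next
  case (snoc a w)
  have "y \<in> hatdw \<delta> U (w @ [a]) \<longleftrightarrow> \<delta> y a \<in> hatdw \<delta> U w"
    by (simp add: hatdw_def hatd_def)
  also have "\<dots> \<longleftrightarrow> dstar \<delta> (\<delta> y a) (rev w) \<in> U" using snoc by simp
  finally show ?case by (simp add: dstar_def)
qed

lemma self_in_gen: "c \<in> gen \<delta> c"
  unfolding gen_def by (rule CollectI, rule exI[of _ "[]"]) (simp add: hatdw_def)

lemma equiv_approx: "equiv UNIV (approx \<delta> c)"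
  by (rule equivI) (auto simp: approx_def refl_on_def sym_def trans_def)

lemma approx_append_right:
  "(w, v) \<in> approx \<delta> c \<Longrightarrow> (w @ u, v @ u) \<in> approx \<delta> c"
  by (auto simp: approx_def hatdw_append)

lemma hatdw_eq_if_approx:
  "(w, v) \<in> approx \<delta> c \<Longrightarrow> hatdw \<delta> c w = hatdw \<delta> c v"
  using self_in_gen by (auto simp: approx_def)

lemma cls_eq_iff: "cls \<delta> c w = cls \<delta> c v \<longleftrightarrow> (w, v) \<in> approx \<delta> c"
  unfolding cls_def using equiv_class_eq_iff[OF equiv_approx] by blast

lemma cls_in_quot: "cls \<delta> c w \<in> quot \<delta> c"
  by (simp add: cls_def quot_def quotientI)

lemma mem_muPL_lang_iff: "u \<in> muPL_lang \<delta> c \<U> \<longleftrightarrow> cls \<delta> c (rev u) \<in> \<U>"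
proof
  assume "u \<in> muPL_lang \<delta> c \<U>"
  then obtain w where "cls \<delta> c w = cls \<delta> c []" and w: "cls \<delta> c (w @ rev u) \<in> \<U>"
    by (auto simp: muPL_lang_def sigmahat_def)
  then have "(w @ rev u, [] @ rev u) \<in> approx \<delta> c"
    using cls_eq_iff approx_append_right by blast
  then show "cls \<delta> c (rev u) \<in> \<U>"
    using w cls_eq_iff by (metis append_Nil)
next
  assume "cls \<delta> c (rev u) \<in> \<U>"
  then show "u \<in> muPL_lang \<delta> c \<U>"
    by (auto simp: muPL_lang_def sigmahat_def)
qed

definition muPL_state :: "('x \<Rightarrow> 'a \<Rightarrow> 'x) \<Rightarrow> 'x set \<Rightarrow> 'x \<Rightarrow> 'a list set set" where
  "muPL_state \<delta> c x = {cls \<delta> c w | w. x \<in> hatdw \<delta> c w}"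

lemma muPL_state_subset_quot: "muPL_state \<delta> c x \<subseteq> quot \<delta> c"
  using cls_in_quot by (auto simp: muPL_state_def)

lemma cls_in_muPL_state_iff: "cls \<delta> c v \<in> muPL_state \<delta> c x \<longleftrightarrow> x \<in> hatdw \<delta> c v"
proof
  assume "cls \<delta> c v \<in> muPL_state \<delta> c x"
  then obtain w where "(v, w) \<in> approx \<delta> c" and "x \<in> hatdw \<delta> c w"
    by (auto simp: muPL_state_def cls_eq_iff)
  then show "x \<in> hatdw \<delta> c v"
    by (simp add: hatdw_eq_if_approx)
qed (auto simp: muPL_state_def)

lemma muPL_lang_muPL_state: "muPL_lang \<delta> c (muPL_state \<delta> c x) = aut_lang \<delta> c x"
  unfolding aut_lang_def
  by (simp add: set_eq_iff mem_muPL_lang_iff cls_in_muPL_state_iff mem_hatdw_iff)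

theorem mainTheorem7:
  fixes \<delta> :: "'x \<Rightarrow> 'a::finite \<Rightarrow> 'x" and c :: "'x set" and x :: 'x
  shows "\<exists>\<U>. \<U> \<subseteq> quot \<delta> c \<and> muPL_lang \<delta> c \<U> = aut_lang \<delta> c x"
  by (intro exI[of _ "muPL_state \<delta> c x"] conjI muPL_state_subset_quot muPL_lang_muPL_state)

end
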